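(* Let $n\neq 5$. Then $V(n,2)=\bigcup_{l=1}^{\lfloor n/2\rfloor}W_l$, and this union is a mutually disjoint union of the $W_l$.
   Context: Let $S=K[x_1,\ldots,x_n]$ over a field $K$; $G(I)$ is the minimal monomial generating set of a monomial ideal $I$. With $\sigma$ the bijection $x_{i_1}\cdots x_{i_k}\mapsto\{i_1,\ldots,i_k\}$ from square-free monomials to subsets of $[n]$, the facet complex $\delta_{\mathcal{F}}(I)$ has facets $\sigma(g)$, $g\in G(I)$, the Stanley–Reisner complex is $\delta_{\mathcal{N}}(I)=\{\sigma(g)\mid g \text{ square-free monomial},\ g\notin I\}$, and a square-free monomial ideal $I$ is an $f$-ideal if both complexes have the same $f$-vector. $V(n,2)$ is the set of $f$-ideals of $S$ all of whose minimal generators have degree $2$. For a nonempty proper $B\subset[n]$ with complement $\overline B$, $W_B=\{x_ix_j\mid i\neq j,\ i,j\in B\text{ or } i,j\in\overline B\}$. An $f$-ideal $I$ with $G(I)$ consisting of square-free monomials of degree 2 is of $l$ type if $W_B\subseteq G(I)$ for some $B\subseteq[n]$ with $|B|=l$; $W_l$ denotes the set of $f$-ideals of $S$ of $l$ type. *)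

theory Defs
  imports Main
begin

text \<open>Monomials of S = K[x_1,...,x_n] are represented by their exponent vectors
  a :: nat \<Rightarrow> nat with support in {1..n}.  A monomial ideal is determined by the set
  of monomials it contains, i.e. a set of exponent vectors closed under multiplication
  by monomials (upward closed for the divisibility order).\<close>

type_synonym monomial = "nat \<Rightarrow> nat"

definition monomials :: "nat \<Rightarrow> monomial set" where
  "monomials n = {a. \<forall>i. i \<notin> {1..n} \<longrightarrow> a i = 0}"

definition mdvd :: "monomial \<Rightarrow> monomial \<Rightarrow> bool" where
  "mdvd a b \<longleftrightarrow> (\<forall>i. a i \<le> b i)"

definition monomial_ideal :: "nat \<Rightarrow> monomial set \<Rightarrow> bool" where
  "monomial_ideal n I \<longleftrightarrow> I \<subseteq> monomials n \<and>
     (\<forall>a\<in>I. \<forall>b\<in>monomials n. mdvd a b \<longrightarrow> b \<in> I)"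

definition mingens :: "monomial set \<Rightarrow> monomial set" where
  "mingens I = {a\<in>I. \<forall>b\<in>I. mdvd b a \<longrightarrow> b = a}"

definition squarefree_mono :: "monomial \<Rightarrow> bool" where
  "squarefree_mono a \<longleftrightarrow> (\<forall>i. a i \<le> 1)"

definition mdeg :: "nat \<Rightarrow> monomial \<Rightarrow> nat" where
  "mdeg n a = (\<Sum>i\<in>{1..n}. a i)"

definition sqfree_monomial_ideal :: "nat \<Rightarrow> monomial set \<Rightarrow> bool" where
  "sqfree_monomial_ideal n I \<longleftrightarrow> monomial_ideal n I \<and> (\<forall>g\<in>mingens I. squarefree_mono g)"

definition sigma :: "monomial \<Rightarrow> nat set" where
  "sigma a = {i. a i \<noteq> 0}"

definition facet_complex :: "monomial set \<Rightarrow> nat set set" where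
  "facet_complex I = {F. \<exists>g\<in>mingens I. F \<subseteq> sigma g}"

definition SR_complex :: "nat \<Rightarrow> monomial set \<Rightarrow> nat set set" where
  "SR_complex n I = {sigma g | g. g \<in> monomials n \<and> squarefree_mono g \<and> g \<notin> I}"

text \<open>f-vector: number of faces with k vertices (k = 0 accounts for the empty face f_{-1}).\<close>
definition fvec :: "nat set set \<Rightarrow> nat \<Rightarrow> nat" where
  "fvec D k = card {F\<in>D. card F = k}"

definition f_ideal :: "nat \<Rightarrow> monomial set \<Rightarrow> bool" where
  "f_ideal n I \<longleftrightarrow> sqfree_monomial_ideal n I \<and>
     (\<forall>k. fvec (facet_complex I) k = fvec (SR_complex n I) k)"

definition V :: "nat \<Rightarrow> nat \<Rightarrow> monomial set set" where
  "V n d = {I. f_ideal n I \<and> (\<forall>g\<in>mingens I. mdeg n g = d)}"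

definition xx :: "nat \<Rightarrow> nat \<Rightarrow> monomial" where
  "xx i j = (\<lambda>k. if k = i \<or> k = j then 1 else 0)"

definition W_B :: "nat \<Rightarrow> nat set \<Rightarrow> monomial set" where
  "W_B n B = {xx i j | i j. i \<noteq> j \<and>
      ((i \<in> B \<and> j \<in> B) \<or> (i \<in> {1..n} - B \<and> j \<in> {1..n} - B))}"

definition l_type :: "nat \<Rightarrow> nat \<Rightarrow> monomial set \<Rightarrow> bool" where
  "l_type n l I \<longleftrightarrow> (\<exists>B. B \<subseteq> {1..n} \<and> B \<noteq> {} \<and> B \<noteq> {1..n} \<and> card B = l \<and>
      W_B n B \<subseteq> mingens I)"

definition W :: "nat \<Rightarrow> nat \<Rightarrow> monomial set set" where
  "W n l = {I. f_ideal n I \<and> (\<forall>g\<in>mingens I. squarefree_mono g \<and> mdeg n g = 2) \<and> l_type n l I}"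

end

theory Submission
  imports Defs "HOL-Library.Indicator_Function"
begin

text \<open>
  For I in V(n,2) the minimal generators are the monomials x_i x_j over the edges of a graph
  on [n], and the faces of the Stanley-Reisner complex are the independent sets of that graph.
  The f-ideal condition therefore says that the complementary graph G (the pairs ij with
  x_i x_j not in I) contains exactly half of all n(n-1)/2 pairs (comparing f_1) and no
  triangle (f_2 of the facet complex vanishes).

  A triangle-free graph with n(n-1)/4 edges is bipartite unless n = 5, the pentagon: the
  neighbourhood N(v) of a vertex of maximal degree is independent, and double counting the
  edges at V - N(v) against the total forces V - N(v) to be independent as well. A set B with
  W_B contained in G(I) is exactly one side of a bipartition of G, so I is of l type for
  l = min(|B|, n - |B|). Two essentially different bipartitions would confine all edges of G to
  two pairs of cells of their common refinement, and these contain fewer than n(n-1)/4 pairs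
  once n >= 3; hence l is unique.
\<close>

section \<open>Square-free monomials as indicator functions\<close>

lemma xx_eq_indicator: "xx i j = indicator {i, j}"
  by (auto simp: xx_def indicator_def)

lemma xx_commute: "xx i j = xx j i"
  by (simp add: xx_eq_indicator insert_commute)

lemma sigma_indicator [simp]: "sigma (indicator F) = F"
  by (simp add: sigma_def indicator_def)

lemma indicator_sigma:
  assumes "squarefree_mono g" shows "indicator (sigma g) = g"
proof
  fix k
  have "g k \<le> 1" using assms by (simp add: squarefree_mono_def)
  then show "indicator (sigma g) k = g k" by (auto simp: sigma_def indicator_def)
qed

lemma squarefree_indicator: "squarefree_mono (indicator F)"
  by (simp add: squarefree_mono_def indicator_def)

lemma indicator_in_monomials: "F \<subseteq> {1..n} \<Longrightarrow> indicator F \<in> monomials n"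
  by (auto simp: monomials_def indicator_def)

lemma sigma_subset: "g \<in> monomials n \<Longrightarrow> sigma g \<subseteq> {1..n}"
  by (auto simp: monomials_def sigma_def)

lemma mdvd_indicator_iff: "mdvd (indicator F) (indicator G) \<longleftrightarrow> F \<subseteq> G"
  by (auto simp: mdvd_def indicator_def)

lemma mdeg_indicator: "F \<subseteq> {1..n} \<Longrightarrow> mdeg n (indicator F) = card F"
  by (simp add: mdeg_def indicator_def Int_absorb1 flip: sum.inter_filter)

lemma mdeg_mono: "mdvd c b \<Longrightarrow> mdeg n c \<le> mdeg n b"
  unfolding mdeg_def mdvd_def by (intro sum_mono) auto

lemma mdvd_antisym_mdeg:
  assumes "b \<in> monomials n" "c \<in> monomials n" "mdvd c b" "mdeg n b \<le> mdeg n c"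
  shows "c = b"
proof
  fix i
  show "c i = b i"
  proof (cases "i \<in> {1..n}")
    case True
    have "mdeg n c = mdeg n b" using assms(4) mdeg_mono[OF assms(3), of n] by simp
    then show ?thesis
      using sum_mono_inv[of c "{1..n}" b i] assms(3) True by (simp add: mdeg_def mdvd_def)
  next
    case False
    then show ?thesis using assms(1,2) by (simp add: monomials_def)
  qed
qed

lemma ex_mingens_mdvd:
  assumes I: "monomial_ideal n I" and "a \<in> I"
  shows "\<exists>g\<in>mingens I. mdvd g a"
proof -
  let ?P = "\<lambda>b. b \<in> I \<and> mdvd b a"
  obtain g where g: "?P g" and least: "\<And>b. ?P b \<Longrightarrow> mdeg n g \<le> mdeg n b"
    using ex_has_least_nat[of ?P a "mdeg n"] \<open>a \<in> I\<close> by (auto simp: mdvd_def)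
  have "g \<in> mingens I"
    unfolding mingens_def
  proof (intro CollectI conjI ballI impI)
    fix b assume b: "b \<in> I" "mdvd b g"
    then have "mdvd b a" using g by (auto simp: mdvd_def intro: order_trans)
    then show "b = g"
      using mdvd_antisym_mdeg[of g n b] least[of b] b g I by (auto simp: monomial_ideal_def)
  qed (use g in simp)
  then show ?thesis using g by blast
qed

section \<open>Triangle-free graphs with half of all possible edges\<close>

locale finite_graph =
  fixes V :: "'a set" and R :: "('a \<times> 'a) set"
  assumes finite_vertices: "finite V"
    and edges_subset: "R \<subseteq> V \<times> V"
    and edges_sym: "(x, y) \<in> R \<Longrightarrow> (y, x) \<in> R"
    and edges_irrefl: "(x, x) \<notin> R"
begin

definition nbrs :: "'a \<Rightarrow> 'a set" where
  "nbrs x = R `` {x}"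

definition degree :: "'a \<Rightarrow> nat" where
  "degree x = card (nbrs x)"

definition independent :: "'a set \<Rightarrow> bool" where
  "independent A \<longleftrightarrow> R \<inter> A \<times> A = {}"

definition bipartition :: "'a set \<Rightarrow> bool" where
  "bipartition B \<longleftrightarrow> (\<forall>(x, y)\<in>R. x \<in> B \<longleftrightarrow> y \<notin> B)"

lemma finite_edges: "finite R"
  using finite_subset[OF edges_subset] finite_vertices by blast

lemma nbrs_subset: "nbrs x \<subseteq> V"
  using edges_subset by (auto simp: nbrs_def)

lemma finite_nbrs: "finite (nbrs x)"
  using finite_subset[OF nbrs_subset finite_vertices] .

lemma bipartition_iff: "bipartition B \<longleftrightarrow> (\<forall>x y. (x, y) \<in> R \<longrightarrow> (x \<in> B \<longleftrightarrow> y \<notin> B))"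
  unfolding bipartition_def by fast

lemma bipartition_iff_independent:
  "bipartition B \<longleftrightarrow> independent (V \<inter> B) \<and> independent (V - B)"
  using edges_subset unfolding bipartition_iff independent_def by blast

lemma bipartition_complement: "bipartition (V - B) \<longleftrightarrow> bipartition B"
  using edges_subset unfolding bipartition_iff by blast

lemma card_edges_eq_twice_card_doubletons:
  "card R = 2 * card ((\<lambda>(x, y). {x, y}) ` R)"
proof -
  let ?e = "\<lambda>(x, y). {x, y}"
  let ?fiber = "\<lambda>F. {p \<in> R. ?e p = F}"
  have "R = (\<Union>F\<in>?e ` R. ?fiber F)" by auto
  also have "card \<dots> = (\<Sum>F\<in>?e ` R. card (?fiber F))"
    by (rule card_UN_disjoint) (use finite_edges in auto)
  also have "\<dots> = (\<Sum>F\<in>?e ` R. 2)"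
  proof (rule sum.cong)
    fix F assume "F \<in> ?e ` R"
    then obtain x y where xy: "(x, y) \<in> R" "F = {x, y}" by auto
    have "x \<noteq> y" using xy edges_irrefl by auto
    have "?fiber F = {(x, y), (y, x)}"
      using xy edges_sym by (auto simp: doubleton_eq_iff)
    thus "card (?fiber F) = 2" using \<open>x \<noteq> y\<close> by simp
  qed simp
  finally show ?thesis by simp
qed

lemma card_edges_from:
  assumes "finite A"
  shows "card (R \<inter> A \<times> C) = (\<Sum>x\<in>A. card (nbrs x \<inter> C))"
proof -
  have "R \<inter> A \<times> C = Sigma A (\<lambda>x. nbrs x \<inter> C)" by (auto simp: nbrs_def)
  thus ?thesis using assms finite_nbrs by simp
qed

lemma card_edges_between_commute: "card (R \<inter> A \<times> B) = card (R \<inter> B \<times> A)"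
proof -
  have "R \<inter> B \<times> A = prod.swap ` (R \<inter> A \<times> B)" using edges_sym by auto
  thus ?thesis by (simp add: card_image)
qed

lemma card_edges_from_split:
  assumes "A \<union> B = V" "A \<inter> B = {}"
  shows "card (R \<inter> A \<times> V) = card (R \<inter> A \<times> A) + card (R \<inter> A \<times> B)"
proof -
  have "R \<inter> A \<times> V = (R \<inter> A \<times> A) \<union> (R \<inter> A \<times> B)" using assms by auto
  also have "card \<dots> = card (R \<inter> A \<times> A) + card (R \<inter> A \<times> B)"
    using assms(2) finite_edges by (intro card_Un_disjoint) auto
  finally show ?thesis .
qed

lemma card_edges_split:
  assumes "A \<union> B = V" "A \<inter> B = {}" "independent B"
  shows "card R = card (R \<inter> A \<times> A) + 2 * card (R \<inter> A \<times> B)"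
proof -
  have "R = (R \<inter> A \<times> V) \<union> (R \<inter> B \<times> V)" using assms(1) edges_subset by auto
  also have "card \<dots> = card (R \<inter> A \<times> V) + card (R \<inter> B \<times> V)"
    using assms(2) finite_edges by (intro card_Un_disjoint) auto
  finally have "card R = card (R \<inter> A \<times> V) + card (R \<inter> B \<times> V)" .
  moreover have "card (R \<inter> B \<times> V) = card (R \<inter> A \<times> B)"
    using card_edges_from_split[of B A] assms card_edges_between_commute[of A B]
    by (simp add: Un_commute Int_commute independent_def)
  ultimately show ?thesis using card_edges_from_split[OF assms(1,2)] by simp
qed

lemma sum_degree_eq: "finite A \<Longrightarrow> (\<Sum>x\<in>A. degree x) = card (R \<inter> A \<times> V)"
  using nbrs_subset by (simp add: card_edges_from degree_def Int_absorb2)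

lemma nbrs_eq_if_max_degree:
  assumes "degree z \<le> degree v" "nbrs v \<subseteq> nbrs z"
  shows "nbrs z = nbrs v"
  using assms card_subset_eq[OF finite_nbrs] by (metis card_mono degree_def finite_nbrs le_antisym)

end

lemma card_Venn2:
  assumes "finite X"
  shows "card X =
    card (X \<inter> B1 \<inter> B2) + card (X \<inter> B1 - B2) + card (X \<inter> B2 - B1) + card (X - B1 - B2)"
proof -
  let ?P = "X \<inter> B1 \<inter> B2" and ?Q = "X \<inter> B1 - B2"
  let ?Q' = "X \<inter> B2 - B1" and ?S = "X - B1 - B2"
  have "X = ((?P \<union> ?Q) \<union> ?Q') \<union> ?S" by auto
  moreover have "card (?P \<union> ?Q) = card ?P + card ?Q"
    using assms by (intro card_Un_disjoint) auto
  moreover have "card ((?P \<union> ?Q) \<union> ?Q') = card (?P \<union> ?Q) + card ?Q'"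
    using assms by (intro card_Un_disjoint) auto
  moreover have "card (((?P \<union> ?Q) \<union> ?Q') \<union> ?S) = card ((?P \<union> ?Q) \<union> ?Q') + card ?S"
    using assms by (intro card_Un_disjoint) auto
  ultimately show ?thesis by simp
qed

text \<open>p, s and q, r are the sizes of the cells of the common refinement of two bipartitions
  on which they agree and disagree, respectively.\<close>

lemma two_cuts_count_arith:
  fixes n p q r s :: nat
  assumes count: "n * (n - 1) \<le> 4 * (p * s + q * r)" and n: "n = p + q + r + s"
    and "1 \<le> p + s" "1 \<le> q + r"
  shows "n \<le> 2"
proof -
  define X Y where "X = int p + int s" and "Y = int q + int r"
  have "int n * (int n - 1) = int (n * (n - 1))"
    by (cases n) (simp_all add: algebra_simps)
  also have "\<dots> \<le> int (4 * (p * s + q * r))"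
    using count by (simp only: of_nat_le_iff)
  finally have "int n * (int n - 1) \<le> 4 * (int p * int s + int q * int r)"
    by simp
  moreover have "4 * (int p * int s) \<le> X * X" "4 * (int q * int r) \<le> Y * Y"
    using zero_le_square[of "int p - int s"] zero_le_square[of "int q - int r"]
    by (simp_all add: X_def Y_def algebra_simps)
  moreover have "int n = X + Y" using n by (simp add: X_def Y_def)
  ultimately have "2 * X * Y \<le> X + Y" by (simp add: algebra_simps)
  moreover have "0 \<le> (X - 1) * (Y - 1)" using assms(3,4) by (simp add: X_def Y_def)
  ultimately show ?thesis using \<open>int n = X + Y\<close> by (simp add: algebra_simps)
qed

context finite_graph
begin

lemma bipartition_unique:
  assumes "bipartition B1" "bipartition B2"
    and count: "2 * card R = card V * (card V - 1)" and "3 \<le> card V"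
  shows "V \<inter> B1 = V \<inter> B2 \<or> V \<inter> B1 = V - B2"
proof (rule ccontr)
  assume different: "\<not> ?thesis"
  define P S Q Q' where "P = V \<inter> B1 \<inter> B2" and "S = V - B1 - B2"
    and "Q = V \<inter> B1 - B2" and "Q' = V \<inter> B2 - B1"
  have fin: "finite P" "finite S" "finite Q" "finite Q'"
    using finite_vertices by (auto simp: P_def S_def Q_def Q'_def)
  have "R \<subseteq> (P \<times> S \<union> S \<times> P) \<union> (Q \<times> Q' \<union> Q' \<times> Q)"
  proof
    fix e assume "e \<in> R"
    moreover obtain x y where e: "e = (x, y)" by (cases e)
    ultimately have "x \<in> V" "y \<in> V" "x \<in> B1 \<longleftrightarrow> y \<notin> B1" "x \<in> B2 \<longleftrightarrow> y \<notin> B2"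
      using assms(1,2) edges_subset by (auto simp: bipartition_def)
    with e show "e \<in> (P \<times> S \<union> S \<times> P) \<union> (Q \<times> Q' \<union> Q' \<times> Q)"
      by (auto simp: P_def S_def Q_def Q'_def)
  qed
  then have "card R \<le> card ((P \<times> S \<union> S \<times> P) \<union> (Q \<times> Q' \<union> Q' \<times> Q))"
    using fin by (intro card_mono) auto
  also have "\<dots> \<le> card (P \<times> S) + card (S \<times> P) + (card (Q \<times> Q') + card (Q' \<times> Q))"
    using card_Un_le[of "P \<times> S \<union> S \<times> P" "Q \<times> Q' \<union> Q' \<times> Q"]
      card_Un_le[of "P \<times> S" "S \<times> P"] card_Un_le[of "Q \<times> Q'" "Q' \<times> Q"] by linarith
  also have "\<dots> = 2 * (card P * card S + card Q * card Q')"
    by (simp add: card_cartesian_product)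
  finally have "card V * (card V - 1) \<le> 4 * (card P * card S + card Q * card Q')"
    using count by linarith
  moreover have "card V = card P + card Q + card Q' + card S"
    unfolding P_def S_def Q_def Q'_def by (rule card_Venn2[OF finite_vertices])
  moreover have "P \<union> S \<noteq> {}" "Q \<union> Q' \<noteq> {}"
    using different by (auto simp: P_def S_def Q_def Q'_def)
  then have "1 \<le> card P + card S" "1 \<le> card Q + card Q'"
    using fin by (auto simp: Suc_le_eq card_gt_0_iff)
  ultimately have "card V \<le> 2" by (rule two_cuts_count_arith)
  with \<open>3 \<le> card V\<close> show False by simp
qed

end

locale triangle_free_graph = finite_graph +
  assumes triangle_free: "(x, y) \<in> R \<Longrightarrow> (y, z) \<in> R \<Longrightarrow> (x, z) \<notin> R"
begin

lemma independent_nbrs: "independent (nbrs v)"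
  unfolding independent_def nbrs_def
proof (rule equals0I)
  fix e assume "e \<in> R \<inter> R `` {v} \<times> R `` {v}"
  then obtain x y where "(v, x) \<in> R" "(v, y) \<in> R" "(x, y) \<in> R" by auto
  then show False using triangle_free[OF edges_sym] by blast
qed

lemma disjoint_nbrs: "(x, y) \<in> R \<Longrightarrow> nbrs x \<inter> nbrs y = {}"
  using triangle_free by (auto simp: nbrs_def)

text \<open>The slack sum vanishes only if every vertex of A other than x and y is adjacent to all
  of B.\<close>

lemma cross_edges_bound:
  assumes fin: "finite A" "finite B" and xy: "x \<in> A" "y \<in> A" "(x, y) \<in> R"
  shows "card (R \<inter> A \<times> B) + card B + (\<Sum>z\<in>A - {x, y}. card B - card (nbrs z \<inter> B))
    \<le> card A * card B"
proof -
  let ?d = "\<lambda>z. card (nbrs z \<inter> B)" and ?A' = "A - {x, y}"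
  have "x \<noteq> y" using xy edges_irrefl by auto
  have d_le: "?d z \<le> card B" for z using fin by (simp add: card_mono)
  have "card (R \<inter> A \<times> B) = ?d x + ?d y + (\<Sum>z\<in>?A'. ?d z)"
  proof -
    have "A - {x} - {y} = ?A'" by auto
    then show ?thesis using fin xy \<open>x \<noteq> y\<close>
      by (simp add: card_edges_from sum.remove[of A x] sum.remove[of "A - {x}" y])
  qed
  moreover have "?d x + ?d y \<le> card B"
  proof -
    have "?d x + ?d y = card ((nbrs x \<inter> B) \<union> (nbrs y \<inter> B))"
      using disjoint_nbrs[OF xy(3)] finite_nbrs by (subst card_Un_disjoint) auto
    also have "\<dots> \<le> card B" using fin by (intro card_mono) auto
    finally show ?thesis .
  qed
  moreover have "(\<Sum>z\<in>?A'. ?d z) + (\<Sum>z\<in>?A'. card B - ?d z) = (card A - 2) * card B"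
    using d_le xy \<open>x \<noteq> y\<close> fin by (simp flip: sum.distrib add: numeral_2_eq_2)
  moreover have "card A \<ge> 2"
    using card_mono[OF fin(1), of "{x, y}"] xy \<open>x \<noteq> y\<close> by simp
  then have "(card A - 2) * card B + 2 * card B = card A * card B"
    by (simp add: diff_mult_distrib mult_le_mono1)
  ultimately show ?thesis by linarith
qed

end

lemma int_square_le_self_iff: "(d::int) * d \<le> d \<longleftrightarrow> d = 0 \<or> d = 1"
proof
  assume "d * d \<le> d"
  moreover have "d \<ge> 2 \<Longrightarrow> 2 * d \<le> d * d" by (simp add: mult_right_mono)
  moreover have "d < 0 \<Longrightarrow> 0 < d * d" by (simp add: zero_less_mult_iff)
  ultimately show "d = 0 \<or> d = 1" by linarith
qed auto

text \<open>Here b = |N(v)| for a vertex v of maximal degree, a = n - b, and s, t count the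
  ordered edges inside V - N(v) and from V - N(v) to N(v).\<close>

lemma split_count_arith:
  fixes a b s t :: nat
  assumes count: "2 * (s + 2 * t) = (a + b) * (a + b - 1)"
    and deg: "s + t \<le> a * b" and cross: "t + b \<le> a * b"
  shows "a \<le> b + 1 \<and> s + t = a * b \<and> t + b = a * b"
proof -
  have count': "2 * (int s + 2 * int t) = (int a + int b) * (int a + int b - 1)"
  proof -
    have "int (m * (m - 1)) = int m * (int m - 1)" for m
      by (cases m) (simp_all add: algebra_simps)
    from this[of "a + b"] show ?thesis using arg_cong[OF count, of int] by simp
  qed
  have deg': "int s + int t \<le> int a * int b" and cross': "int t + int b \<le> int a * int b"
    using deg cross by (simp_all flip: of_nat_add of_nat_mult)
  then have "2 * (int s + 2 * int t) \<le> 4 * (int a * int b) - 2 * int b"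
    by arith
  then have "(int a + int b) * (int a + int b - 1) \<le> 4 * (int a * int b) - 2 * int b"
    by (simp only: count')
  then have "(int a - int b) * (int a - int b) \<le> int a - int b"
    by (simp add: algebra_simps)
  then have "int a - int b = 0 \<or> int a - int b = 1"
    by (simp add: int_square_le_self_iff)
  then have "(int a + int b) * (int a + int b - 1) = 4 * (int a * int b) - 2 * int b"
    by (auto simp: algebra_simps)
  then have "int s + int t = int a * int b \<and> int t + int b = int a * int b"
    using count' deg' cross' by arith
  then show ?thesis using \<open>int a - int b = 0 \<or> int a - int b = 1\<close>
    by (auto simp flip: of_nat_add of_nat_mult)
qed

context triangle_free_graph
begin

lemma nonnbrs_edge_counts:
  fixes v x y :: 'a
  defines "B \<equiv> nbrs v" and "A \<equiv> V - nbrs v"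
  assumes v: "v \<in> V" "\<forall>x\<in>V. degree x \<le> degree v"
    and count: "2 * card R = card V * (card V - 1)"
    and xy: "x \<in> A" "y \<in> A" "(x, y) \<in> R"
  shows "card A \<le> card B + 1" "card (R \<inter> A \<times> A) = card B"
    and "\<forall>z\<in>A - {x, y}. nbrs z = B"
proof -
  have part: "A \<union> B = V" "A \<inter> B = {}" using nbrs_subset by (auto simp: A_def B_def)
  then have fin: "finite A" "finite B" and "card V = card A + card B"
    using finite_vertices card_Un_disjoint[of A B] by auto
  have count': "2 * (card (R \<inter> A \<times> A) + 2 * card (R \<inter> A \<times> B))
      = (card A + card B) * (card A + card B - 1)"
    using card_edges_split[OF part] independent_nbrs count \<open>card V = _\<close> by (simp add: B_def)
  have "card (R \<inter> A \<times> A) + card (R \<inter> A \<times> B) = (\<Sum>z\<in>A. degree z)"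
    using sum_degree_eq card_edges_from_split[OF part] fin by simp
  also have "\<dots> \<le> card A * card B"
    using sum_mono[of A degree "\<lambda>_. card B"] v part by (auto simp: B_def degree_def)
  finally have deg: "card (R \<inter> A \<times> A) + card (R \<inter> A \<times> B) \<le> card A * card B" .
  note cross = cross_edges_bound[OF fin xy]
  then have "card (R \<inter> A \<times> B) + card B \<le> card A * card B" by linarith
  from split_count_arith[OF count' deg this]
  have balance: "card A \<le> card B + 1" "card (R \<inter> A \<times> A) = card B"
    "card (R \<inter> A \<times> B) + card B = card A * card B" by auto
  then show "card A \<le> card B + 1" "card (R \<inter> A \<times> A) = card B" by simp_all
  have full: "card B \<le> card (nbrs z \<inter> B)" if "z \<in> A - {x, y}" for z
    using balance(3) cross fin that by auto
  show "\<forall>z\<in>A - {x, y}. nbrs z = B"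
  proof
    fix z assume z: "z \<in> A - {x, y}"
    have "nbrs z \<inter> B = B" using full[OF z] fin by (intro card_seteq) auto
    then show "nbrs z = B"
      using nbrs_eq_if_max_degree[of z v] v z part by (auto simp: B_def)
  qed
qed

lemma independent_nonnbrs_of_max_degree:
  assumes v: "v \<in> V" "\<forall>x\<in>V. degree x \<le> degree v"
    and count: "2 * card R = card V * (card V - 1)" and "card V \<noteq> 5"
  shows "independent (V - nbrs v)"
proof (rule ccontr)
  let ?A = "V - nbrs v"
  assume "\<not> independent ?A"
  then obtain x y where xy: "x \<in> ?A" "y \<in> ?A" "(x, y) \<in> R" by (auto simp: independent_def)
  note counts = nonnbrs_edge_counts[OF v count xy]
  have "R \<inter> ?A \<times> ?A \<subseteq> {(x, y), (y, x)}"
  proof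
    fix e assume "e \<in> R \<inter> ?A \<times> ?A"
    then obtain p q where pq: "e = (p, q)" "(p, q) \<in> R" "p \<in> ?A" "q \<in> ?A" by auto
    then have "p \<in> {x, y}" "q \<in> {x, y}"
      using counts(3) edges_sym[OF pq(2)] by (auto simp: nbrs_def)
    then show "e \<in> {(x, y), (y, x)}" using pq(1,2) edges_irrefl by auto
  qed
  then have "card (R \<inter> ?A \<times> ?A) \<le> card {(x, y), (y, x)}" by (rule card_mono[rotated]) simp
  also have "\<dots> \<le> 2" by (rule card_insert_le_m1) simp_all
  finally have "card (nbrs v) \<le> 2" using counts(2) by (simp only:)
  moreover have "card {v, x, y} \<le> card ?A" using finite_vertices xy v edges_irrefl
    by (intro card_mono) (auto simp: nbrs_def)
  moreover have "card {v, x, y} = 3"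
  proof -
    have "y \<in> nbrs x" "x \<in> nbrs y" using xy edges_sym by (auto simp: nbrs_def)
    then have "v \<noteq> x" "v \<noteq> y" using xy by auto
    moreover have "x \<noteq> y" using xy edges_irrefl by auto
    ultimately show ?thesis by simp
  qed
  moreover have "card V = card ?A + card (nbrs v)"
    using card_Diff_subset[OF finite_nbrs nbrs_subset] card_mono[OF finite_vertices nbrs_subset]
    by simp
  ultimately show False using counts(1) \<open>card V \<noteq> 5\<close> by linarith
qed

lemma bipartition_if_half_dense:
  assumes count: "2 * card R = card V * (card V - 1)" and "card V \<noteq> 5" and "R \<noteq> {}"
  shows "\<exists>B \<subseteq> V. B \<noteq> {} \<and> B \<noteq> V \<and> bipartition B"
proof -
  obtain p q where pq: "(p, q) \<in> R" using \<open>R \<noteq> {}\<close> by auto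
  then have "p \<in> V" using edges_subset by auto
  have "Max (degree ` V) \<in> degree ` V" using finite_vertices \<open>p \<in> V\<close> by (intro Max_in) auto
  then obtain v where "v \<in> V" "degree v = Max (degree ` V)" by auto
  then have v: "v \<in> V" "\<forall>x\<in>V. degree x \<le> degree v" using finite_vertices by auto
  have "q \<in> nbrs p" using pq by (simp add: nbrs_def)
  then have "0 < degree p" using finite_nbrs by (auto simp: degree_def card_gt_0_iff)
  then have "nbrs v \<noteq> {}" using v \<open>p \<in> V\<close> by (fastforce simp: degree_def)
  moreover have "nbrs v \<noteq> V" using v edges_irrefl by (auto simp: nbrs_def)
  moreover have "bipartition (nbrs v)"
    using independent_nbrs independent_nonnbrs_of_max_degree[OF v count \<open>card V \<noteq> 5\<close>] nbrs_subset
    by (simp add: bipartition_iff_independent Int_absorb1)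
  ultimately show ?thesis using nbrs_subset by blast
qed

end

section \<open>Quadratic f-ideals\<close>

locale quadratic_f_ideal =
  fixes n :: nat and I :: "monomial set"
  assumes in_V2: "I \<in> V n 2"
begin

lemma is_monomial_ideal: "monomial_ideal n I"
  using in_V2 by (simp add: V_def f_ideal_def sqfree_monomial_ideal_def)

lemma fvec_eq: "fvec (facet_complex I) k = fvec (SR_complex n I) k"
  using in_V2 by (simp add: V_def f_ideal_def)

lemma mingens_xx:
  assumes "g \<in> mingens I"
  obtains i j where "i \<noteq> j" "i \<in> {1..n}" "j \<in> {1..n}" "g = xx i j"
proof -
  have "squarefree_mono g" "mdeg n g = 2" "g \<in> monomials n"
    using assms in_V2 is_monomial_ideal
    by (auto simp: V_def f_ideal_def sqfree_monomial_ideal_def monomial_ideal_def mingens_def)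
  then have "sigma g \<subseteq> {1..n}" and g: "indicator (sigma g) = g"
    using sigma_subset indicator_sigma by simp_all
  moreover from this have "card (sigma g) = 2" using \<open>mdeg n g = 2\<close> mdeg_indicator by metis
  ultimately show ?thesis using that by (auto simp: card_2_iff xx_eq_indicator)
qed

lemma xx_in_mingens:
  assumes "i \<noteq> j" "i \<in> {1..n}" "j \<in> {1..n}" "xx i j \<in> I"
  shows "xx i j \<in> mingens I"
proof -
  obtain g where g: "g \<in> mingens I" "mdvd g (xx i j)"
    using ex_mingens_mdvd[OF is_monomial_ideal assms(4)] by blast
  obtain k l where kl: "k \<noteq> l" "k \<in> {1..n}" "l \<in> {1..n}" "g = xx k l"
    using g(1) by (rule mingens_xx)
  then have "{k, l} \<subseteq> {i, j}" using g(2) by (simp add: xx_eq_indicator mdvd_indicator_iff)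
  then have "{k, l} = {i, j}" using kl(1) assms(1) by (intro card_subset_eq) auto
  then show ?thesis using g kl by (simp add: xx_eq_indicator)
qed

lemma indicator_in_iff:
  assumes "F \<subseteq> {1..n}"
  shows "indicator F \<in> I \<longleftrightarrow> (\<exists>i\<in>F. \<exists>j\<in>F. i \<noteq> j \<and> xx i j \<in> I)"
proof
  assume "indicator F \<in> I"
  then obtain g where g: "g \<in> mingens I" "mdvd g (indicator F)"
    using ex_mingens_mdvd[OF is_monomial_ideal] by blast
  obtain i j where "i \<noteq> j" "g = xx i j" using g(1) by (rule mingens_xx)
  moreover have "g \<in> I" using g(1) by (simp add: mingens_def)
  ultimately show "\<exists>i\<in>F. \<exists>j\<in>F. i \<noteq> j \<and> xx i j \<in> I"
    using g(2) by (auto simp: xx_eq_indicator mdvd_indicator_iff)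
next
  assume "\<exists>i\<in>F. \<exists>j\<in>F. i \<noteq> j \<and> xx i j \<in> I"
  then obtain i j where "i \<in> F" "j \<in> F" "xx i j \<in> I" by blast
  moreover have "mdvd (xx i j) (indicator F)"
    using \<open>i \<in> F\<close> \<open>j \<in> F\<close> by (simp add: xx_eq_indicator mdvd_indicator_iff)
  ultimately show "indicator F \<in> I"
    using is_monomial_ideal indicator_in_monomials[OF assms] by (auto simp: monomial_ideal_def)
qed

lemma facet_complex_eq:
  "facet_complex I = {F. \<exists>i j. i \<noteq> j \<and> i \<in> {1..n} \<and> j \<in> {1..n} \<and> xx i j \<in> I \<and> F \<subseteq> {i, j}}"
proof (intro set_eqI iffI)
  fix F assume "F \<in> facet_complex I"
  then obtain g where g: "g \<in> mingens I" "F \<subseteq> sigma g" by (auto simp: facet_complex_def)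
  moreover obtain i j where "i \<noteq> j" "i \<in> {1..n}" "j \<in> {1..n}" "g = xx i j"
    using g(1) by (rule mingens_xx)
  ultimately show "F \<in> {F. \<exists>i j. i \<noteq> j \<and> i \<in> {1..n} \<and> j \<in> {1..n} \<and> xx i j \<in> I \<and> F \<subseteq> {i, j}}"
    by (auto simp: mingens_def xx_eq_indicator)
next
  fix F assume "F \<in> {F. \<exists>i j. i \<noteq> j \<and> i \<in> {1..n} \<and> j \<in> {1..n} \<and> xx i j \<in> I \<and> F \<subseteq> {i, j}}"
  then obtain i j where "i \<noteq> j" "i \<in> {1..n}" "j \<in> {1..n}" "xx i j \<in> I" "F \<subseteq> {i, j}" by blast
  then show "F \<in> facet_complex I"
    using xx_in_mingens by (force simp: facet_complex_def xx_eq_indicator)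
qed

lemma SR_complex_eq:
  "SR_complex n I = {F. F \<subseteq> {1..n} \<and> (\<forall>i\<in>F. \<forall>j\<in>F. i \<noteq> j \<longrightarrow> xx i j \<notin> I)}"
proof (intro set_eqI iffI)
  fix F assume "F \<in> SR_complex n I"
  then obtain g where "F = sigma g" "g \<in> monomials n" "squarefree_mono g" "g \<notin> I"
    by (auto simp: SR_complex_def)
  then show "F \<in> {F. F \<subseteq> {1..n} \<and> (\<forall>i\<in>F. \<forall>j\<in>F. i \<noteq> j \<longrightarrow> xx i j \<notin> I)}"
    using indicator_in_iff[of F] sigma_subset indicator_sigma by auto
next
  fix F assume "F \<in> {F. F \<subseteq> {1..n} \<and> (\<forall>i\<in>F. \<forall>j\<in>F. i \<noteq> j \<longrightarrow> xx i j \<notin> I)}"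
  then have "F \<subseteq> {1..n}" "indicator F \<notin> I" using indicator_in_iff by auto
  then show "F \<in> SR_complex n I"
    unfolding SR_complex_def
    using indicator_in_monomials squarefree_indicator sigma_indicator by blast
qed

definition edges :: "(nat \<times> nat) set" where
  "edges = {(i, j). i \<in> {1..n} \<and> j \<in> {1..n} \<and> i \<noteq> j \<and> xx i j \<in> I}"

definition nonedges :: "(nat \<times> nat) set" where
  "nonedges = {(i, j). i \<in> {1..n} \<and> j \<in> {1..n} \<and> i \<noteq> j \<and> xx i j \<notin> I}"

lemma finite_graph_edges: "finite_graph {1..n} edges"
  by unfold_locales (auto simp: edges_def xx_commute)

lemma finite_graph_nonedges: "finite_graph {1..n} nonedges"
  by unfold_locales (auto simp: nonedges_def xx_commute)

lemma facet_faces_card_2: "{F \<in> facet_complex I. card F = 2} = (\<lambda>(i, j). {i, j}) ` edges"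
proof (intro set_eqI iffI)
  fix F assume "F \<in> {F \<in> facet_complex I. card F = 2}"
  then obtain i j where ij: "i \<noteq> j" "i \<in> {1..n}" "j \<in> {1..n}" "xx i j \<in> I" "F \<subseteq> {i, j}"
    and "card F = 2" by (auto simp: facet_complex_eq)
  then have "F = {i, j}" by (intro card_subset_eq) auto
  with ij show "F \<in> (\<lambda>(i, j). {i, j}) ` edges" by (force simp: edges_def)
qed (auto simp: facet_complex_eq edges_def)

lemma SR_faces_card_2: "{F \<in> SR_complex n I. card F = 2} = (\<lambda>(i, j). {i, j}) ` nonedges"
proof (intro set_eqI iffI)
  fix F assume F: "F \<in> {F \<in> SR_complex n I. card F = 2}"
  then obtain i j where "F = {i, j}" "i \<noteq> j" by (auto simp: card_2_iff)
  with F show "F \<in> (\<lambda>(i, j). {i, j}) ` nonedges" by (force simp: SR_complex_eq nonedges_def)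
qed (auto simp: SR_complex_eq nonedges_def xx_commute)

lemma finite_SR_complex: "finite (SR_complex n I)"
  by (rule finite_subset[of _ "Pow {1..n}"]) (auto simp: SR_complex_eq)

lemma nonedges_triangle_free:
  assumes "(i, j) \<in> nonedges" "(j, k) \<in> nonedges"
  shows "(i, k) \<notin> nonedges"
proof
  assume "(i, k) \<in> nonedges"
  with assms have "{i, j, k} \<in> {F \<in> SR_complex n I. card F = 3}"
    by (auto simp: SR_complex_eq nonedges_def xx_commute)
  then have "fvec (SR_complex n I) 3 \<noteq> 0"
    using finite_SR_complex by (auto simp: fvec_def)
  moreover have "card F \<le> 2" if F: "F \<in> facet_complex I" for F
  proof -
    obtain a b where "F \<subseteq> {a, b}" using F by (auto simp: facet_complex_eq)
    then have "card F \<le> card {a, b}" by (intro card_mono) auto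
    also have "\<dots> \<le> 2" by (rule card_insert_le_m1) simp_all
    finally show ?thesis .
  qed
  then have "{F \<in> facet_complex I. card F = 3} = {}" by fastforce
  then have "fvec (facet_complex I) 3 = 0" unfolding fvec_def by (simp only: card.empty)
  ultimately show False using fvec_eq by simp
qed

sublocale triangle_free_graph "{1..n}" nonedges
  by (rule triangle_free_graph.intro[OF finite_graph_nonedges])
    (unfold_locales, fact nonedges_triangle_free)

lemma card_nonedges: "2 * card nonedges = n * (n - 1)"
proof -
  interpret E: finite_graph "{1..n}" edges by (rule finite_graph_edges)
  have "card edges = card nonedges"
    using fvec_eq[of 2] E.card_edges_eq_twice_card_doubletons card_edges_eq_twice_card_doubletons
    by (simp add: fvec_def facet_faces_card_2 SR_faces_card_2)
  moreover have "card edges + card nonedges = n * (n - 1)"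
  proof -
    have "card edges + card nonedges = card (edges \<union> nonedges)"
      using E.finite_edges finite_edges
      by (rule card_Un_disjoint[symmetric]) (auto simp: edges_def nonedges_def)
    also have "edges \<union> nonedges = Sigma {1..n} (\<lambda>i. {1..n} - {i})"
      by (auto simp: edges_def nonedges_def)
    also have "card \<dots> = n * (n - 1)" by simp
    finally show ?thesis .
  qed
  ultimately show ?thesis by simp
qed

lemma three_le_n: "3 \<le> n"
proof -
  have "{} \<in> SR_complex n I" by (simp add: SR_complex_eq)
  then have "fvec (facet_complex I) 0 \<noteq> 0"
    using fvec_eq finite_SR_complex by (auto simp: fvec_def)
  then have "facet_complex I \<noteq> {}" by (auto simp: fvec_def)
  then obtain i j where "i \<noteq> j" "i \<in> {1..n}" "j \<in> {1..n}"
    by (auto simp: fvec_def facet_complex_eq)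
  then have "2 \<le> n" by auto
  moreover have "n \<noteq> 2"
  proof
    assume "n = 2"
    then have "card nonedges = 1" using card_nonedges by simp
    then show False
      using card_edges_eq_twice_card_doubletons by simp
  qed
  ultimately show ?thesis by simp
qed

lemma W_B_subset_mingens_iff:
  assumes "B \<subseteq> {1..n}"
  shows "W_B n B \<subseteq> mingens I \<longleftrightarrow> bipartition B"
proof
  assume W: "W_B n B \<subseteq> mingens I"
  show "bipartition B"
    unfolding bipartition_iff
  proof (intro allI impI)
    fix x y assume "(x, y) \<in> nonedges"
    then have xy: "x \<in> {1..n}" "y \<in> {1..n}" "x \<noteq> y" "xx x y \<notin> I"
      by (simp_all add: nonedges_def)
    show "x \<in> B \<longleftrightarrow> y \<notin> B"
    proof (rule ccontr)
      assume "\<not> (x \<in> B \<longleftrightarrow> y \<notin> B)"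
      then have "(x \<in> B \<and> y \<in> B) \<or> (x \<in> {1..n} - B \<and> y \<in> {1..n} - B)" using xy by auto
      then have "xx x y \<in> W_B n B" using xy(3) unfolding W_B_def by blast
      then have "xx x y \<in> I" using W by (auto simp: mingens_def)
      with xy(4) show False by contradiction
    qed
  qed
next
  assume "bipartition B"
  show "W_B n B \<subseteq> mingens I"
  proof
    fix g assume "g \<in> W_B n B"
    then obtain i j where ij: "g = xx i j" "i \<noteq> j"
      "(i \<in> B \<and> j \<in> B) \<or> (i \<in> {1..n} - B \<and> j \<in> {1..n} - B)"
      unfolding W_B_def by blast
    then have "i \<in> {1..n}" "j \<in> {1..n}" using assms by auto
    moreover have "(i, j) \<notin> nonedges"
      using \<open>bipartition B\<close> ij(3) unfolding bipartition_iff by blast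
    ultimately have "xx i j \<in> I" using ij(2) by (simp add: nonedges_def)
    then show "g \<in> mingens I" using xx_in_mingens ij \<open>i \<in> {1..n}\<close> \<open>j \<in> {1..n}\<close> by simp
  qed
qed

lemma l_type_iff:
  "l_type n l I \<longleftrightarrow> (\<exists>B \<subseteq> {1..n}. B \<noteq> {} \<and> B \<noteq> {1..n} \<and> card B = l \<and> bipartition B)"
  unfolding l_type_def using W_B_subset_mingens_iff by blast

lemma ex_l_type:
  assumes "n \<noteq> 5"
  shows "\<exists>l\<in>{1..n div 2}. l_type n l I"
proof -
  have "nonedges \<noteq> {}" using card_nonedges three_le_n by auto
  then obtain B where B: "B \<subseteq> {1..n}" "B \<noteq> {}" "B \<noteq> {1..n}" "bipartition B"
    using bipartition_if_half_dense card_nonedges assms by auto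
  define B' where "B' = {1..n} - B"
  have B': "B' \<subseteq> {1..n}" "B' \<noteq> {}" "B' \<noteq> {1..n}" "bipartition B'"
    using B bipartition_complement by (auto simp: B'_def)
  have "card B + card B' = n" using B(1) card_Diff_subset[of B "{1..n}"] card_mono[OF _ B(1)]
    by (auto simp: B'_def finite_subset)
  moreover have "1 \<le> card B" "1 \<le> card B'"
    using B(2) B'(2) B(1) B'(1) by (auto simp: Suc_le_eq card_gt_0_iff finite_subset)
  ultimately have "card B \<in> {1..n div 2} \<or> card B' \<in> {1..n div 2}" by auto
  moreover have "l_type n (card B) I" "l_type n (card B') I"
    using B B' unfolding l_type_iff by blast+
  ultimately show ?thesis by blast
qed

lemma l_type_unique:
  assumes "l_type n l1 I" "l_type n l2 I" "l1 \<le> n div 2" "l2 \<le> n div 2"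
  shows "l1 = l2"
proof -
  obtain B1 B2 where B: "B1 \<subseteq> {1..n}" "card B1 = l1" "bipartition B1"
    "B2 \<subseteq> {1..n}" "card B2 = l2" "bipartition B2"
    using assms(1,2) by (auto simp: l_type_iff)
  then have "B1 = B2 \<or> B1 = {1..n} - B2"
    using bipartition_unique[OF B(3) B(6)] card_nonedges three_le_n by (simp add: Int_absorb1)
  then show ?thesis
  proof
    assume "B1 = {1..n} - B2"
    then have "l1 = n - l2" using B card_Diff_subset[of B2 "{1..n}"] by (simp add: finite_subset)
    moreover have "l2 \<le> n" using B card_mono[of "{1..n}" B2] by simp
    ultimately show ?thesis using assms(3,4) by linarith
  qed (use B in simp)
qed

end

lemma W_subset_V: "W n l \<subseteq> V n 2"
  by (auto simp: W_def V_def)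

lemma V_subset_UN_W:
  assumes "I \<in> V n 2" "n \<noteq> 5"
  shows "\<exists>l\<in>{1..n div 2}. I \<in> W n l"
proof -
  interpret quadratic_f_ideal n I by (rule quadratic_f_ideal.intro) fact
  obtain l where l: "l \<in> {1..n div 2}" "l_type n l I" using ex_l_type assms(2) by blast
  have "f_ideal n I" using assms(1) by (simp add: V_def)
  moreover have "\<forall>g\<in>mingens I. squarefree_mono g \<and> mdeg n g = 2"
    using assms(1) by (auto simp: V_def f_ideal_def sqfree_monomial_ideal_def)
  ultimately have "I \<in> W n l" using l(2) by (simp add: W_def)
  with l(1) show ?thesis ..
qed

lemma W_disjoint:
  assumes "I \<in> W n l1" "I \<in> W n l2" "l1 \<le> n div 2" "l2 \<le> n div 2"
  shows "l1 = l2"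
proof -
  interpret quadratic_f_ideal n I
    by (rule quadratic_f_ideal.intro) (use assms(1) W_subset_V in blast)
  show ?thesis using l_type_unique assms by (simp add: W_def)
qed

theorem theorem4p6:
  fixes n :: nat
  assumes "n \<noteq> 5"
  shows "V n 2 = (\<Union>l\<in>{1..n div 2}. W n l)
    \<and> (\<forall>l1\<in>{1..n div 2}. \<forall>l2\<in>{1..n div 2}. l1 \<noteq> l2 \<longrightarrow> W n l1 \<inter> W n l2 = {})"
proof
  show "V n 2 = (\<Union>l\<in>{1..n div 2}. W n l)"
    using V_subset_UN_W[OF _ assms] W_subset_V by blast
  show "\<forall>l1\<in>{1..n div 2}. \<forall>l2\<in>{1..n div 2}. l1 \<noteq> l2 \<longrightarrow> W n l1 \<inter> W n l2 = {}"
    using W_disjoint by fastforce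
qed

end
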